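(* Assume $\ker(K)\cap\ker(D)=\{0\}$. Then for any $\delta\ge 0$ and any reconstructor $\Psi$, the function $\mathcal{J}_{\Psi,\delta}:\mathcal{X}\to\mathbb{R}$, $$\mathcal{J}_{\Psi,\delta}(x)=\|Kx-y^\delta\|_2^2+\lambda\,\|w(\Psi(y^\delta))\odot|Dx|\|_1,$$ is coercive.
   Context: Let $K\in\mathbb{R}^{m\times n}$ with $m\le n$, and let $D_h,D_v\in\mathbb{R}^{n\times n}$ be the discrete horizontal and vertical difference operators; $D:\mathbb{R}^n\to\mathbb{R}^{2n}$, $Dx=\begin{bmatrix}D_hx\\ D_vx\end{bmatrix}$, and $|Dx|\in\mathbb{R}^n$, $(|Dx|)_i=\sqrt{(D_hx)_i^2+(D_vx)_i^2}$. $\mathcal{X}=\{x\in\mathbb{R}^n: x_i\ge 0\ \forall i\}$. Fix $\lambda>0$, $\eta>0$, $p\in(0,1)$, and for $\tilde x\in\mathbb{R}^n$ define weights $(w(\tilde{x}))_i=\big(\eta/\sqrt{\eta^2+(|D\tilde{x}|)_i^2}\big)^{1-p}$. A reconstructor is a Lipschitz continuous map $\Psi:\mathbb{R}^m\to\mathbb{R}^n$. For $\delta\ge0$, $y^\delta\in\mathbb{R}^m$ denotes data $y^\delta=Kx^{GT}+e$ with $x^{GT}\in\mathcal{X}$ and $\|e\|_2\le\delta$. $\odot$ is the entrywise product. *)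

theory Defs
  imports "HOL-Analysis.Analysis"
begin

text \<open>Pixelwise gradient magnitude |Dx|, with D x = (D_h x, D_v x).\<close>
definition absD :: "real^'n^'n \<Rightarrow> real^'n^'n \<Rightarrow> real^'n \<Rightarrow> real^'n" where
  "absD Dh Dv x = (\<chi> i. sqrt (((Dh *v x) $ i)^2 + ((Dv *v x) $ i)^2))"

definition weights :: "real \<Rightarrow> real \<Rightarrow> real^'n^'n \<Rightarrow> real^'n^'n \<Rightarrow> real^'n \<Rightarrow> real^'n" where
  "weights \<eta> p Dh Dv xt =
     (\<chi> i. (\<eta> / sqrt (\<eta>^2 + ((absD Dh Dv xt) $ i)^2)) powr (1 - p))"

definition norm1 :: "real^'n \<Rightarrow> real" where
  "norm1 v = (\<Sum>i\<in>UNIV. \<bar>v $ i\<bar>)"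

definition nonneg_orthant :: "(real^'n) set" where
  "nonneg_orthant = {x. \<forall>i. 0 \<le> x $ i}"

definition Jfun :: "real^'n^'m \<Rightarrow> real^'n^'n \<Rightarrow> real^'n^'n \<Rightarrow> real \<Rightarrow> real \<Rightarrow> real
    \<Rightarrow> (real^'m \<Rightarrow> real^'n) \<Rightarrow> real^'m \<Rightarrow> real^'n \<Rightarrow> real" where
  "Jfun K Dh Dv lam \<eta> p \<Psi> y x =
     (norm (K *v x - y))^2 + lam * norm1 (weights \<eta> p Dh Dv (\<Psi> y) * absD Dh Dv x)"

definition coercive_on :: "'a::real_normed_vector set \<Rightarrow> ('a \<Rightarrow> real) \<Rightarrow> bool" where
  "coercive_on S f \<longleftrightarrow> (\<forall>M. \<exists>R. \<forall>x\<in>S. norm x \<ge> R \<longrightarrow> f x \<ge> M)"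

end

theory Submission
  imports Defs
begin

text \<open>The weights are positive, so they are bounded below by some c > 0 and the weighted
  TV term dominates c-multiples of the norms of D_h x and D_v x; the fidelity term, via
  z^2 \<ge> 2z - 1, grows at least linearly in the norm of Kx. Since ker K \<inter> ker D = {0}, the
  linear map x \<mapsto> (Kx, D_h x, D_v x) is injective, hence bounded below on the finite-dimensional
  space, so J grows at least linearly in the norm of x.\<close>

lemma coercive_onI_linear_lower_bound:
  assumes "a > 0" and "\<And>x. x \<in> S \<Longrightarrow> a * norm x - b \<le> f x"
  shows "coercive_on S f"
  unfolding coercive_on_def
proof
  fix M
  have "M \<le> f x" if "x \<in> S" and "(\<bar>M\<bar> + \<bar>b\<bar>) / a \<le> norm x" for x
  proof -
    have "\<bar>M\<bar> + \<bar>b\<bar> \<le> a * norm x"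
      using that(2) \<open>a > 0\<close> by (simp add: divide_le_eq mult.commute)
    then show ?thesis using assms(2)[OF that(1)] by linarith
  qed
  then show "\<exists>R. \<forall>x\<in>S. R \<le> norm x \<longrightarrow> M \<le> f x" by blast
qed

lemma linear_triple_injective_lower_bound:
  fixes f :: "'a::euclidean_space \<Rightarrow> 'b::euclidean_space"
    and g :: "'a \<Rightarrow> 'c::euclidean_space" and h :: "'a \<Rightarrow> 'd::euclidean_space"
  assumes "linear f" "linear g" "linear h"
    and "\<And>x. f x = 0 \<Longrightarrow> g x = 0 \<Longrightarrow> h x = 0 \<Longrightarrow> x = 0"
  obtains \<epsilon> where "\<epsilon> > 0" "\<And>x. \<epsilon> * norm x \<le> norm (f x) + norm (g x) + norm (h x)"
proof -
  define F where "F x = (f x, g x, h x)" for x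
  have "bounded_linear F"
    unfolding F_def using assms(1-3)
    by (intro bounded_linear_Pair) (simp_all add: linear_conv_bounded_linear)
  moreover have "\<forall>x\<in>UNIV. F x = 0 \<longrightarrow> x = 0"
    using assms(4) by (simp add: F_def zero_prod_def)
  ultimately obtain \<epsilon> where "\<epsilon> > 0" and \<epsilon>: "\<And>x. \<epsilon> * norm x \<le> norm (F x)"
    using injective_imp_isometric[OF closed_UNIV subspace_UNIV] by blast
  have "norm (F x) \<le> norm (f x) + norm (g x) + norm (h x)" for x
    using norm_Pair_le[of "f x" "(g x, h x)"] norm_Pair_le[of "g x" "h x"]
    by (simp add: F_def)
  then show ?thesis using that[OF \<open>\<epsilon> > 0\<close>] \<epsilon> order_trans by blast
qed

lemma absD_nonneg: "0 \<le> absD Dh Dv x $ i"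
  by (simp add: absD_def)

lemma norm_le_sum_absD:
  fixes Dh Dv :: "real^'n^'n" and x :: "real^'n"
  shows "norm (Dh *v x) \<le> (\<Sum>i\<in>UNIV. absD Dh Dv x $ i)"
    and "norm (Dv *v x) \<le> (\<Sum>i\<in>UNIV. absD Dh Dv x $ i)"
proof -
  have "\<bar>(Dh *v x) $ i\<bar> \<le> absD Dh Dv x $ i" "\<bar>(Dv *v x) $ i\<bar> \<le> absD Dh Dv x $ i" for i
    by (simp_all add: absD_def real_le_rsqrt)
  then show "norm (Dh *v x) \<le> (\<Sum>i\<in>UNIV. absD Dh Dv x $ i)"
    and "norm (Dv *v x) \<le> (\<Sum>i\<in>UNIV. absD Dh Dv x $ i)"
    using norm_le_l1_cart[of "Dh *v x"] norm_le_l1_cart[of "Dv *v x"]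
    by (meson order_trans sum_mono)+
qed

lemma weights_pos: "\<eta> > 0 \<Longrightarrow> 0 < weights \<eta> p Dh Dv xt $ i"
  by (simp add: weights_def)

lemma norm1_mult_ge:
  assumes "\<And>i. c \<le> w $ i" and "\<And>i. 0 \<le> v $ i"
  shows "c * (\<Sum>i\<in>UNIV. v $ i) \<le> norm1 (w * v)"
proof -
  have "c * (\<Sum>i\<in>UNIV. v $ i) \<le> (\<Sum>i\<in>UNIV. w $ i * v $ i)"
    unfolding sum_distrib_left by (intro sum_mono mult_right_mono assms)
  also have "\<dots> \<le> norm1 (w * v)"
    unfolding norm1_def by (intro sum_mono) simp
  finally show ?thesis .
qed

lemma Jfun_ge_linear:
  assumes "lam > 0" and "\<eta> > 0"
  obtains k where "k > 0"
    and "\<And>x. k * (norm (K *v x) + norm (Dh *v x) + norm (Dv *v x)) - 2 * norm y - 1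
              \<le> Jfun K Dh Dv lam \<eta> p \<Psi> y x"
proof -
  define w where "w = weights \<eta> p Dh Dv (\<Psi> y)"
  define c where "c = Min (range (\<lambda>i. w $ i))"
  have "c > 0" and "\<And>i. c \<le> w $ i"
    unfolding c_def w_def by (simp_all add: weights_pos[OF \<open>\<eta> > 0\<close>])
  define k where "k = min 2 (lam * c / 2)"
  have "k > 0" using \<open>c > 0\<close> \<open>lam > 0\<close> by (simp add: k_def)
  have "k * (norm (K *v x) + norm (Dh *v x) + norm (Dv *v x)) - 2 * norm y - 1
          \<le> Jfun K Dh Dv lam \<eta> p \<Psi> y x" for x
  proof -
    define z where "z = norm (K *v x - y)"
    define s where "s = (\<Sum>i\<in>UNIV. absD Dh Dv x $ i)"
    have fidelity: "2 * norm (K *v x) - 2 * norm y - 1 \<le> z\<^sup>2"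
    proof -
      have "2 * z - 1 \<le> z\<^sup>2" using zero_le_power2[of "z - 1"] by (simp add: power2_diff)
      moreover have "norm (K *v x) - norm y \<le> z"
        unfolding z_def using norm_triangle_ineq2 by blast
      ultimately show ?thesis by linarith
    qed
    have "lam * (c * s) \<le> lam * norm1 (w * absD Dh Dv x)"
      unfolding s_def using \<open>lam > 0\<close> \<open>\<And>i. c \<le> w $ i\<close>
      by (simp add: norm1_mult_ge absD_nonneg)
    moreover have "k * (norm (Dh *v x) + norm (Dv *v x)) \<le> lam * (c * s)"
    proof -
      have "k * (norm (Dh *v x) + norm (Dv *v x)) \<le> lam * c / 2 * (2 * s)"
        using norm_le_sum_absD[where Dh = Dh and Dv = Dv and x = x] \<open>k > 0\<close>
        by (intro mult_mono) (simp_all add: k_def s_def)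
      then show ?thesis by simp
    qed
    moreover have "k * norm (K *v x) \<le> 2 * norm (K *v x)"
      by (simp add: k_def mult_right_mono)
    ultimately show ?thesis
      using fidelity by (simp add: Jfun_def z_def w_def s_def distrib_left)
  qed
  then show ?thesis using that \<open>k > 0\<close> by blast
qed

lemma Jfun_coercive_on:
  assumes "lam > 0" and "\<eta> > 0"
    and ker: "\<forall>x. K *v x = 0 \<and> Dh *v x = 0 \<and> Dv *v x = 0 \<longrightarrow> x = 0"
  shows "coercive_on S (Jfun K Dh Dv lam \<eta> p \<Psi> y)"
proof -
  obtain \<epsilon> where "\<epsilon> > 0"
    and \<epsilon>: "\<And>x. \<epsilon> * norm x \<le> norm (K *v x) + norm (Dh *v x) + norm (Dv *v x)"
    using linear_triple_injective_lower_bound[of "(*v) K" "(*v) Dh" "(*v) Dv"] ker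
    by (metis matrix_vector_mul_linear)
  obtain k where "k > 0"
    and k: "\<And>x. k * (norm (K *v x) + norm (Dh *v x) + norm (Dv *v x)) - 2 * norm y - 1
                \<le> Jfun K Dh Dv lam \<eta> p \<Psi> y x"
    using Jfun_ge_linear[OF assms(1,2)] by blast
  have "k * \<epsilon> * norm x - (2 * norm y + 1) \<le> Jfun K Dh Dv lam \<eta> p \<Psi> y x" for x
  proof -
    have "k * (\<epsilon> * norm x) \<le> k * (norm (K *v x) + norm (Dh *v x) + norm (Dv *v x))"
      using \<epsilon>[of x] \<open>k > 0\<close> by simp
    then show ?thesis using k[of x] by simp
  qed
  then show ?thesis
    using \<open>k > 0\<close> \<open>\<epsilon> > 0\<close> by (intro coercive_onI_linear_lower_bound[of "k * \<epsilon>"]) simp_all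
qed

theorem lemma2:
  fixes K :: "real^'n^'m" and Dh Dv :: "real^'n^'n"
    and lam \<eta> p \<delta> :: real
    and \<Psi> :: "real^'m \<Rightarrow> real^'n"
    and xGT :: "real^'n" and e y\<delta> :: "real^'m"
  assumes "CARD('m) \<le> CARD('n)"
    and "lam > 0" and "\<eta> > 0" and "0 < p" and "p < 1"
    and ker: "\<forall>x. K *v x = 0 \<and> Dh *v x = 0 \<and> Dv *v x = 0 \<longrightarrow> x = 0"
    and lip: "\<exists>L. L-lipschitz_on UNIV \<Psi>"
    and "\<delta> \<ge> 0"
    and "xGT \<in> nonneg_orthant" and "norm e \<le> \<delta>" and "y\<delta> = K *v xGT + e"
  shows "coercive_on nonneg_orthant (Jfun K Dh Dv lam \<eta> p \<Psi> y\<delta>)"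
  using Jfun_coercive_on[OF \<open>lam > 0\<close> \<open>\<eta> > 0\<close> ker] .

end
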